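(* Let $n,p,d\in\mathbb{N}$ and let $M\subseteq\mathbb{R}^{n+p+d}$ be a closed convex set inducing an MICP formulation of a set $S\subseteq\mathbb{R}^n$. Let $I=\operatorname{proj}_{\mathbf z}(M)$ be its index set and $\{A_{\mathbf z}\}_{\mathbf z\in I}$ its $\mathbf z$-projected sets. Then \[ \big(\operatorname{cl}(A_{\mathbf z})\big)_\infty=\big(\operatorname{cl}(A_{\mathbf z'})\big)_\infty\qquad\text{for all }\mathbf z,\mathbf z'\in\operatorname{relint}(I). \]
   Context: Variables in $\mathbb{R}^{n+p+d}$ are written $(\mathbf x,\mathbf y,\mathbf z)$ with $\mathbf x\in\mathbb{R}^n$, $\mathbf y\in\mathbb{R}^p$, $\mathbf z\in\mathbb{R}^d$; $\operatorname{proj}_{\mathbf x}$, $\operatorname{proj}_{\mathbf z}$ denote the coordinate projections. A closed convex set $M\subseteq\mathbb{R}^{n+p+d}$ induces an MICP formulation of $S\subseteq\mathbb{R}^n$ if: $\mathbf x\in S$ iff there exist $\mathbf y\in\mathbb{R}^p$, $\mathbf z\in\mathbb{Z}^d$ with $(\mathbf x,\mathbf y,\mathbf z)\in M$. The index set of the formulation is $I=\operatorname{proj}_{\mathbf z}(M)$, and for each $\mathbf z\in I$ the $\mathbf z$-projected set is $A_{\mathbf z}=\operatorname{proj}_{\mathbf x}\big(M\cap(\mathbb{R}^{n+p}\times\{\mathbf z\})\big)$. For a convex set $C$, its recession cone is $C_\infty=\{\mathbf r:\ \mathbf x+\lambda\mathbf r\in C\ \forall\mathbf x\in C,\ \forall\lambda\ge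 0\}$. $\operatorname{cl}$ denotes closure and $\operatorname{relint}$ relative interior. *)

theory Defs
  imports "HOL-Analysis.Analysis"
begin

text \<open>Points of R^{n+p+d} are triples (x, y, z) with x :: real^'n, y :: real^'p, z :: real^'d.\<close>

definition integral_vec :: "real^'d \<Rightarrow> bool" where
  "integral_vec z \<longleftrightarrow> (\<forall>i. z $ i \<in> \<int>)"

definition induces_MICP ::
  "((real^'n) \<times> (real^'p) \<times> (real^'d)) set \<Rightarrow> (real^'n) set \<Rightarrow> bool" where
  "induces_MICP M S \<longleftrightarrow> closed M \<and> convex M \<and>
     (\<forall>x. x \<in> S \<longleftrightarrow> (\<exists>y z. integral_vec z \<and> (x, y, z) \<in> M))"

definition index_set ::
  "((real^'n) \<times> (real^'p) \<times> (real^'d)) set \<Rightarrow> (real^'d) set" where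
  "index_set M = (\<lambda>(x, y, z). z) ` M"

definition z_projected ::
  "((real^'n) \<times> (real^'p) \<times> (real^'d)) set \<Rightarrow> real^'d \<Rightarrow> (real^'n) set" where
  "z_projected M z = (\<lambda>(x, y, z'). x) ` (M \<inter> {(x, y, z'). z' = z})"

definition recession_cone :: "'a::real_vector set \<Rightarrow> 'a set" where
  "recession_cone C = {r. \<forall>x\<in>C. \<forall>t::real. t \<ge> 0 \<longrightarrow> x + t *\<^sub>R r \<in> C}"

end

theory Submission
  imports Defs
begin

text \<open>Let \<open>z \<in> I\<close> and \<open>z' \<in> relint I\<close>. Since \<open>I\<close> is convex, the segment from \<open>z\<close> through \<open>z'\<close>
  can be prolonged inside \<open>I\<close> to some \<open>z''\<close>, so \<open>z' = \<mu> z + (1 - \<mu>) z''\<close> with \<open>0 < \<mu> \<le> 1\<close>.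
  Fixing \<open>a \<in> A\<^sub>z\<^sub>'\<^sub>'\<close>, convexity of \<open>M\<close> maps \<open>A\<^sub>z\<close> into \<open>A\<^sub>z\<^sub>'\<close> by \<open>p \<mapsto> \<mu> p + (1 - \<mu>) a\<close>,
  and likewise for the closures. This map sends a recession ray of \<open>cl A\<^sub>z\<close> to a ray
  of \<open>cl A\<^sub>z\<^sub>'\<close> with the same direction, and for a closed convex set a single ray in
  direction \<open>r\<close> already makes \<open>r\<close> a recession direction. Hence
  \<open>(cl A\<^sub>z)\<^sub>\<infinity> \<subseteq> (cl A\<^sub>z\<^sub>')\<^sub>\<infinity>\<close>, and equality on \<open>relint I\<close> follows by symmetry.\<close>

lemma mem_z_projected_iff: "x \<in> z_projected M z \<longleftrightarrow> (\<exists>y. (x, y, z) \<in> M)"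
  unfolding z_projected_def by force

lemma mem_index_set_iff: "z \<in> index_set M \<longleftrightarrow> (\<exists>x y. (x, y, z) \<in> M)"
  unfolding index_set_def by force

lemma convex_index_set:
  fixes M :: "((real^'n) \<times> (real^'p) \<times> (real^'d)) set"
  assumes "convex M"
  shows "convex (index_set M)"
proof -
  have "index_set M = (snd \<circ> snd) ` M"
    unfolding index_set_def by (simp add: case_prod_unfold comp_def)
  moreover have "linear (snd \<circ> snd :: (real^'n) \<times> (real^'p) \<times> (real^'d) \<Rightarrow> real^'d)"
    by (intro linear_compose linear_snd)
  ultimately show ?thesis
    using convex_linear_image assms by metis
qed

lemma z_projected_convex_combination:
  assumes "convex M" "p \<in> z_projected M z" "a \<in> z_projected M z''"
    and "0 \<le> \<mu>" "\<mu> \<le> 1"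
  shows "\<mu> *\<^sub>R p + (1 - \<mu>) *\<^sub>R a \<in> z_projected M (\<mu> *\<^sub>R z + (1 - \<mu>) *\<^sub>R z'')"
proof -
  obtain y b where "(p, y, z) \<in> M" "(a, b, z'') \<in> M"
    using assms(2,3) by (auto simp: mem_z_projected_iff)
  then have "\<mu> *\<^sub>R (p, y, z) + (1 - \<mu>) *\<^sub>R (a, b, z'') \<in> M"
    by (rule convexD[OF assms(1)]) (use assms(4,5) in auto)
  then show ?thesis
    by (auto simp: mem_z_projected_iff)
qed

lemma convex_z_projected:
  assumes "convex M"
  shows "convex (z_projected M z)"
proof (rule convexI)
  fix p a and u v :: real
  assume "p \<in> z_projected M z" "a \<in> z_projected M z" "0 \<le> u" "0 \<le> v" "u + v = 1"
  moreover have "v = 1 - u" and "u *\<^sub>R z + (1 - u) *\<^sub>R z = z"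
    using \<open>u + v = 1\<close> by (simp_all add: scaleR_left_distrib[symmetric])
  ultimately show "u *\<^sub>R p + v *\<^sub>R a \<in> z_projected M z"
    using z_projected_convex_combination[OF assms, of p z a z u] by simp
qed

text \<open>A limit argument: \<open>u + s r\<close> is the limit of the points \<open>(1 - c) u + c (w + (s/c) r)\<close>
  of \<open>C\<close> as \<open>c \<rightarrow> 0\<^sup>+\<close>.\<close>

lemma mem_recession_cone_if_ray:
  fixes C :: "'a::real_normed_vector set"
  assumes "closed C" "convex C" "w \<in> C" "\<And>t. t \<ge> 0 \<Longrightarrow> w + t *\<^sub>R r \<in> C"
  shows "r \<in> recession_cone C"
  unfolding recession_cone_def
proof (intro CollectI ballI allI impI)
  fix u and s :: real
  assume u: "u \<in> C" and s: "s \<ge> 0"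
  define c where "c n = inverse (real (Suc n))" for n
  define q where "q n = u + s *\<^sub>R r + c n *\<^sub>R (w - u)" for n
  have c: "0 < c n" "c n \<le> 1" for n
    by (simp_all add: c_def inverse_le_1_iff)
  have "q n \<in> C" for n
  proof -
    have "(1 - c n) *\<^sub>R u + c n *\<^sub>R (w + (s / c n) *\<^sub>R r) \<in> C"
      using convexD_alt[OF assms(2) u assms(4)] c[of n] s by simp
    moreover have "(1 - c n) *\<^sub>R u + c n *\<^sub>R (w + (s / c n) *\<^sub>R r) = q n"
      using c[of n] by (simp add: q_def algebra_simps)
    ultimately show ?thesis by simp
  qed
  moreover have "q \<longlonglongrightarrow> u + s *\<^sub>R r + 0 *\<^sub>R (w - u)"
    unfolding q_def c_def by (intro tendsto_intros LIMSEQ_inverse_real_of_nat)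
  ultimately show "u + s *\<^sub>R r \<in> C"
    using closed_sequentially[OF assms(1)] by auto
qed

lemma recession_cone_subset_if_scaled_image_subset:
  fixes C D :: "'a::real_normed_vector set"
  assumes "closed D" "convex D" "x \<in> C" "\<mu> > 0"
    and "(\<lambda>p. \<mu> *\<^sub>R p + a) ` C \<subseteq> D"
  shows "recession_cone C \<subseteq> recession_cone D"
proof
  fix r assume r: "r \<in> recession_cone C"
  have "(\<mu> *\<^sub>R x + a) + t *\<^sub>R r \<in> D" if "t \<ge> 0" for t
  proof -
    have "x + (t / \<mu>) *\<^sub>R r \<in> C"
      using r assms(3,4) that by (auto simp: recession_cone_def)
    then have "\<mu> *\<^sub>R (x + (t / \<mu>) *\<^sub>R r) + a \<in> D"
      using assms(5) by blast
    then show ?thesis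
      using assms(4) by (simp add: algebra_simps)
  qed
  then show "r \<in> recession_cone D"
    using mem_recession_cone_if_ray[OF assms(1,2)] by (metis add_0_right scale_zero_left order_refl)
qed

lemma recession_cone_closure_z_projected_subset:
  fixes M :: "((real^'n) \<times> (real^'p) \<times> (real^'d)) set"
  assumes "convex M" "z \<in> index_set M" "z' \<in> rel_interior (index_set M)"
  shows "recession_cone (closure (z_projected M z)) \<subseteq> recession_cone (closure (z_projected M z'))"
proof -
  obtain e where e: "e > 1" "(1 - e) *\<^sub>R z + e *\<^sub>R z' \<in> index_set M"
    using convex_rel_interior_iff[OF convex_index_set[OF assms(1)]] assms(2,3) by blast
  define z'' where "z'' = (1 - e) *\<^sub>R z + e *\<^sub>R z'"
  define \<mu> where "\<mu> = 1 - 1 / e"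
  have \<mu>: "0 < \<mu>" "\<mu> \<le> 1"
    using e(1) by (auto simp: \<mu>_def)
  have z': "\<mu> *\<^sub>R z + (1 - \<mu>) *\<^sub>R z'' = z'"
    using e(1) by (simp add: \<mu>_def z''_def algebra_simps)
  obtain a where a: "a \<in> z_projected M z''"
    using e(2) by (auto simp: z''_def mem_index_set_iff mem_z_projected_iff)
  obtain x where "x \<in> z_projected M z"
    using assms(2) by (auto simp: mem_index_set_iff mem_z_projected_iff)
  let ?f = "\<lambda>p. \<mu> *\<^sub>R p + (1 - \<mu>) *\<^sub>R a"
  have "?f ` z_projected M z \<subseteq> z_projected M z'"
    using z_projected_convex_combination[OF assms(1) _ a] \<mu> z' by auto
  then have "?f ` closure (z_projected M z) \<subseteq> closure (z_projected M z')"
    using closure_subset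
    by (intro image_closure_subset continuous_intros closed_closure) blast+
  moreover have "convex (closure (z_projected M z'))"
    by (intro convex_closure convex_z_projected assms(1))
  moreover have "x \<in> closure (z_projected M z)"
    using \<open>x \<in> z_projected M z\<close> closure_subset by blast
  ultimately show ?thesis
    using recession_cone_subset_if_scaled_image_subset[OF closed_closure] \<mu>(1) by blast
qed

theorem proposition1:
  fixes M :: "((real^'n) \<times> (real^'p) \<times> (real^'d)) set"
    and S :: "(real^'n) set"
  assumes "induces_MICP M S"
    and "z \<in> rel_interior (index_set M)"
    and "z' \<in> rel_interior (index_set M)"
  shows "recession_cone (closure (z_projected M z)) = recession_cone (closure (z_projected M z'))"
proof -
  have "convex M"
    using assms(1) by (simp add: induces_MICP_def)
  then show ?thesis
    using recession_cone_closure_z_projected_subset[of M] rel_interior_subset assms(2,3)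
    by (intro subset_antisym) blast+
qed

end
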